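(* Let $K$ be a symmetric convex body in $\mathbb R^n$, let $\mu$ be a log-concave probability measure on $\mathbb R^n$, and let $m$ be the median of $x\mapsto\|x\|_K$ with respect to $\mu$. Then: (a) for every $\varepsilon\in(0,1)$, $$\mu(\{x:\|x\|_K\leqslant(1-\varepsilon)m\})\leqslant\frac12\exp(-2\varepsilon\vartheta_\mu(K))\leqslant\frac12\exp\big(-c\varepsilon/\sqrt{\beta_\mu(K)}\big);$$ (b) if moreover the pair $(\mu,K)$ has the B-property and $\mu(K)\leqslant1/2$, then for all $\varepsilon\in(0,1)$ $$\mu(\varepsilon K)\leqslant\varepsilon^{2f_K(m)}\mu(K)\leqslant\varepsilon^{\frac{1}{16\,\mathbb E|\|Z\|_K-m|}}\mu(K),$$ and in particular $\mu(\{x:\|x\|_K\leqslant\varepsilon m\})\leqslant\frac12\varepsilon^{2\vartheta_\mu(K)}\leqslant\frac12\varepsilon^{c/\sqrt{\beta_\mu(K)}}$ for every $\varepsilon\in(0,1)$. Here $c>0$ is an absolute constant.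
   Context: $\|\cdot\|_K$ is the norm with unit ball $K$. $Z$ is a random vector with law $\mu$, $F_K(t)=\mu(\{x:\|x\|_K\leqslant t\})$, $f_K=F_K'$ its density, and $\vartheta_\mu(K)=m f_K(m)$. $\beta_\mu(K)=\mathrm{Var}(\|Z\|_K)/(\mathbb E\|Z\|_K)^2$. The pair $(\mu,K)$ has the B-property if $t\mapsto\mu(e^tK)$ is log-concave on $\mathbb R$. *)

theory Defs
  imports "HOL-Probability.Probability"
begin

text \<open>We model R^n concretely (so that the absolute constant c can be quantified
  outside of the dimension n) as the extensional functions PiE {..<n} (%_. UNIV),
  i.e. the carrier of the standard product Lebesgue measure PiM {..<n} (\<lambda>_. lborel).\<close>

definition Rn :: "nat \<Rightarrow> (nat \<Rightarrow> real) set" where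
  "Rn n = PiE {..<n} (\<lambda>_. UNIV)"

definition LebN :: "nat \<Rightarrow> (nat \<Rightarrow> real) measure" where
  "LebN n = PiM {..<n} (\<lambda>_. lborel)"

definition vplus :: "nat \<Rightarrow> (nat \<Rightarrow> real) \<Rightarrow> (nat \<Rightarrow> real) \<Rightarrow> (nat \<Rightarrow> real)" where
  "vplus n x y = (\<lambda>i\<in>{..<n}. x i + y i)"

definition vscale :: "nat \<Rightarrow> real \<Rightarrow> (nat \<Rightarrow> real) \<Rightarrow> (nat \<Rightarrow> real)" where
  "vscale n t x = (\<lambda>i\<in>{..<n}. t * x i)"

definition convexN :: "nat \<Rightarrow> (nat \<Rightarrow> real) set \<Rightarrow> bool" where
  "convexN n K \<longleftrightarrow> (\<forall>x\<in>K. \<forall>y\<in>K. \<forall>t::real. 0 \<le> t \<and> t \<le> 1 \<longrightarrow>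
      vplus n (vscale n t x) (vscale n (1 - t) y) \<in> K)"

text \<open>Symmetric convex body in R^n: compact, convex, nonempty interior (relative to R^n,
  whose subspace topology in the product topology is the Euclidean one), K = -K.\<close>
definition sym_convex_body :: "nat \<Rightarrow> (nat \<Rightarrow> real) set \<Rightarrow> bool" where
  "sym_convex_body n K \<longleftrightarrow> K \<subseteq> Rn n \<and> compact K \<and> convexN n K \<and>
     (\<exists>U. openin (top_of_set (Rn n)) U \<and> U \<noteq> {} \<and> U \<subseteq> K) \<and>
     (\<forall>x\<in>K. vscale n (-1) x \<in> K)"

definition normK :: "nat \<Rightarrow> (nat \<Rightarrow> real) set \<Rightarrow> (nat \<Rightarrow> real) \<Rightarrow> real" where
  "normK n K x = Inf {t. 0 < t \<and> x \<in> vscale n t ` K}"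

definition minkc :: "nat \<Rightarrow> real \<Rightarrow> (nat \<Rightarrow> real) set \<Rightarrow> (nat \<Rightarrow> real) set \<Rightarrow> (nat \<Rightarrow> real) set" where
  "minkc n l A B = {vplus n (vscale n l a) (vscale n (1 - l) b) | a b. a \<in> A \<and> b \<in> B}"

text \<open>Log-concave probability measure on R^n (Borell's definition, tested on nonempty compact
  sets; equivalent to the Borel-set version by inner regularity).\<close>
definition log_concave_measure :: "nat \<Rightarrow> (nat \<Rightarrow> real) measure \<Rightarrow> bool" where
  "log_concave_measure n \<mu> \<longleftrightarrow> prob_space \<mu> \<and> sets \<mu> = sets (LebN n) \<and>
     (\<forall>A B l. compact A \<and> compact B \<and> A \<noteq> {} \<and> B \<noteq> {} \<and> A \<subseteq> Rn n \<and> B \<subseteq> Rn n \<and>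
        0 < l \<and> l < 1 \<and> A \<in> sets \<mu> \<and> B \<in> sets \<mu> \<and> minkc n l A B \<in> sets \<mu> \<longrightarrow>
        measure \<mu> (minkc n l A B) \<ge> measure \<mu> A powr l * measure \<mu> B powr (1 - l))"

definition log_concave_fun :: "(real \<Rightarrow> real) \<Rightarrow> bool" where
  "log_concave_fun g \<longleftrightarrow> (\<forall>x. 0 \<le> g x) \<and>
     (\<forall>x y l. 0 < l \<and> l < 1 \<longrightarrow> g (l * x + (1 - l) * y) \<ge> g x powr l * g y powr (1 - l))"

definition FK :: "nat \<Rightarrow> (nat \<Rightarrow> real) measure \<Rightarrow> (nat \<Rightarrow> real) set \<Rightarrow> real \<Rightarrow> real" where
  "FK n \<mu> K t = measure \<mu> {x \<in> space \<mu>. normK n K x \<le> t}"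

definition is_median :: "nat \<Rightarrow> (nat \<Rightarrow> real) measure \<Rightarrow> (nat \<Rightarrow> real) set \<Rightarrow> real \<Rightarrow> bool" where
  "is_median n \<mu> K m \<longleftrightarrow> measure \<mu> {x \<in> space \<mu>. normK n K x \<le> m} \<ge> 1/2 \<and>
                            measure \<mu> {x \<in> space \<mu>. normK n K x \<ge> m} \<ge> 1/2"

definition betaK :: "nat \<Rightarrow> (nat \<Rightarrow> real) measure \<Rightarrow> (nat \<Rightarrow> real) set \<Rightarrow> real" where
  "betaK n \<mu> K =
     (let E = (\<integral>x. normK n K x \<partial>\<mu>) in (\<integral>x. (normK n K x - E)\<^sup>2 \<partial>\<mu>) / E\<^sup>2)"

definition B_property :: "nat \<Rightarrow> (nat \<Rightarrow> real) measure \<Rightarrow> (nat \<Rightarrow> real) set \<Rightarrow> bool" where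
  "B_property n \<mu> K \<longleftrightarrow> log_concave_fun (\<lambda>t. measure \<mu> (vscale n (exp t) ` K))"

end

theory Submission
  imports Defs
begin

text \<open>The distribution function \<open>F = F\<^sub>K\<close> of the norm is log-concave on \<open>(0, \<infinity>)\<close>, because
  \<open>\<lambda> sK + (1 - \<lambda>) tK \<subseteq> (\<lambda> s + (1 - \<lambda>) t) K\<close>. Hence \<open>F\<close> lies below the exponential of the tangent of
  \<open>ln F\<close> at the median, where \<open>F m = 1/2\<close> and \<open>F' m = f\<close>; this is (a). Under the B-property the same
  tangent argument applies to \<open>t \<mapsto> F (e\<^sup>t)\<close> at \<open>ln m\<close>, which gives (b).
  The tangent bound at \<open>m + 1/(8f)\<close> leaves mass \<open>1/4\<close> beyond that point, so both
  \<open>\<bbbE>|\<parallel>Z\<parallel> - m|\<close> and the standard deviation are at least of order \<open>1/f\<close>. To compare with \<open>\<beta>\<close> it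
  remains to show \<open>\<bbbE>\<parallel>Z\<parallel> \<le> C m\<close>. Applying log-concavity to \<open>mK\<close> and a shell shows that the masses
  \<open>p\<^sub>j\<close> of the shells \<open>m (2 + 2\<^sup>j) \<le> \<parallel>x\<parallel> \<le> m (2 + 2\<^sup>j\<^sup>+\<^sup>1)\<close> satisfy \<open>p\<^sub>j\<^sub>+\<^sub>2 \<le> 2 (p\<^sub>j + p\<^sub>j\<^sub>+\<^sub>1)\<^sup>2\<close>.
  Two consecutive masses among the first 256 are below \<open>1/64\<close> by pigeonhole, and from there on
  the masses decay geometrically.\<close>

section \<open>Coordinates of \<open>\<real>\<^sup>n\<close>\<close>

definition vzero :: "nat \<Rightarrow> nat \<Rightarrow> real" where
  "vzero n = (\<lambda>i\<in>{..<n}. 0)"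

definition l1_norm :: "nat \<Rightarrow> (nat \<Rightarrow> real) \<Rightarrow> real" where
  "l1_norm n x = (\<Sum>i<n. \<bar>x i\<bar>)"

lemma Rn_iff: "x \<in> Rn n \<longleftrightarrow> (\<forall>i. n \<le> i \<longrightarrow> x i = undefined)"
  by (auto simp: Rn_def PiE_iff extensional_def)

lemma vscale_in_Rn [simp]: "vscale n t x \<in> Rn n"
  and vplus_in_Rn [simp]: "vplus n x y \<in> Rn n"
  and vzero_in_Rn [simp]: "vzero n \<in> Rn n"
  by (auto simp: Rn_iff vscale_def vplus_def vzero_def)

lemma vscale_apply: "vscale n t x i = (if i < n then t * x i else undefined)"
  and vplus_apply: "vplus n x y i = (if i < n then x i + y i else undefined)"
  and vzero_apply: "vzero n i = (if i < n then 0 else undefined)"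
  by (simp_all add: vscale_def vplus_def vzero_def)

lemma Rn_eqI: "x \<in> Rn n \<Longrightarrow> y \<in> Rn n \<Longrightarrow> (\<And>i. i < n \<Longrightarrow> x i = y i) \<Longrightarrow> x = y"
  unfolding Rn_iff by (rule ext) (metis not_le)

lemma vscale_vscale [simp]: "vscale n a (vscale n b x) = vscale n (a * b) x"
  by (rule Rn_eqI[where n=n]) (auto simp: vscale_apply)

lemma vscale_one: "x \<in> Rn n \<Longrightarrow> vscale n 1 x = x"
  by (rule Rn_eqI) (auto simp: vscale_apply)

lemma vscale_zero: "vscale n 0 x = vzero n"
  by (rule Rn_eqI[where n=n]) (auto simp: vscale_apply vzero_apply)

lemma l1_norm_vscale: "l1_norm n (vscale n c x) = \<bar>c\<bar> * l1_norm n x"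
  by (simp add: l1_norm_def vscale_apply abs_mult sum_distrib_left)

lemma l1_norm_nonneg: "0 \<le> l1_norm n x"
  by (simp add: l1_norm_def sum_nonneg)

lemma l1_norm_eq_0_iff: "x \<in> Rn n \<Longrightarrow> l1_norm n x = 0 \<longleftrightarrow> x = vzero n"
proof
  assume x: "x \<in> Rn n" and "l1_norm n x = 0"
  then have "\<forall>i<n. x i = 0"
    unfolding l1_norm_def by (subst (asm) sum_nonneg_eq_0_iff) auto
  then show "x = vzero n" using x by (intro Rn_eqI[where n=n]) (auto simp: vzero_apply)
qed (simp add: l1_norm_def vzero_apply)

lemma continuous_on_l1_norm: "continuous_on S (l1_norm n)"
  unfolding l1_norm_def
  by (intro continuous_intros continuous_on_subset[OF continuous_on_product_coordinates]) auto

lemma continuous_on_vscale: "continuous_on S (vscale n t)"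
proof (intro continuous_on_coordinatewise_then_product)
  fix i show "continuous_on S (\<lambda>x. vscale n t x i)"
    unfolding vscale_apply
    by (cases "i < n") (auto intro!: continuous_intros
        continuous_on_subset[OF continuous_on_product_coordinates])
qed

lemma continuous_on_vscale_scalar: "continuous_on S (\<lambda>c. vscale n c x)"
proof (intro continuous_on_coordinatewise_then_product)
  fix i show "continuous_on S (\<lambda>c. vscale n c x i)"
    unfolding vscale_apply by (cases "i < n") (auto intro!: continuous_intros)
qed

lemma open_contains_uniform_ball:
  fixes V :: "('a \<Rightarrow> real) set"
  assumes "open V" "u \<in> V"
  obtains \<delta> where "\<delta> > 0" "\<And>y. (\<And>i. \<bar>y i - u i\<bar> < \<delta>) \<Longrightarrow> y \<in> V"
proof -
  have "openin (product_topology (\<lambda>i. euclidean) UNIV) V"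
    using assms(1) by (simp add: euclidean_product_topology)
  from product_topology_open_contains_basis[OF this assms(2)]
  obtain X where X: "u \<in> (\<Pi>\<^sub>E i\<in>UNIV. X i)" "\<forall>i. open (X i)"
    "finite {i. X i \<noteq> UNIV}" "(\<Pi>\<^sub>E i\<in>UNIV. X i) \<subseteq> V"
    by auto
  define F where "F = {i. X i \<noteq> UNIV}"
  have "\<forall>i\<in>F. \<exists>d>0. ball (u i) d \<subseteq> X i"
    using X(1,2) by (auto simp: open_contains_ball PiE_iff)
  then obtain d where d: "\<And>i. i \<in> F \<Longrightarrow> d i > 0 \<and> ball (u i) (d i) \<subseteq> X i"
    by metis
  define \<delta> where "\<delta> = Min (insert 1 (d ` F))"
  have fin: "finite (insert 1 (d ` F))" using X(3) by (simp add: F_def)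
  show ?thesis
  proof
    show "\<delta> > 0" unfolding \<delta>_def using fin d by (subst Min_gr_iff) auto
    fix y assume y: "\<And>i. \<bar>y i - u i\<bar> < \<delta>"
    have "y i \<in> X i" for i
    proof (cases "i \<in> F")
      case True
      then have "\<delta> \<le> d i" unfolding \<delta>_def using fin by auto
      then have "y i \<in> ball (u i) (d i)" using y[of i] by (simp add: dist_real_def abs_minus_commute)
      then show ?thesis using d[OF True] by blast
    qed (simp add: F_def)
    then show "y \<in> V" using X(4) by (auto simp: PiE_iff)
  qed
qed

lemma openin_Rn_contains_l1_ball:
  assumes "openin (top_of_set (Rn n)) U" "u \<in> U"
  shows "\<exists>\<delta>>0. \<forall>y\<in>Rn n. (\<Sum>i<n. \<bar>y i - u i\<bar>) < \<delta> \<longrightarrow> y \<in> U"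
proof -
  obtain V where V: "open V" "U = Rn n \<inter> V"
    using assms(1) by (auto simp: openin_open)
  obtain \<delta> where \<delta>: "\<delta> > 0" "\<And>y. (\<And>i. \<bar>y i - u i\<bar> < \<delta>) \<Longrightarrow> y \<in> V"
    using open_contains_uniform_ball[OF V(1)] V(2) assms(2) by blast
  have "y \<in> U" if y: "y \<in> Rn n" "(\<Sum>i<n. \<bar>y i - u i\<bar>) < \<delta>" for y
  proof -
    have "\<bar>y i - u i\<bar> < \<delta>" for i
    proof (cases "i < n")
      case True
      then have "\<bar>y i - u i\<bar> \<le> (\<Sum>i<n. \<bar>y i - u i\<bar>)" by (intro member_le_sum) auto
      then show ?thesis using y(2) by linarith
    next
      case False
      then show ?thesis using y(1) assms(2) V(2) \<delta>(1) by (auto simp: Rn_iff)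
    qed
    then show ?thesis using \<delta>(2) V(2) y(1) by blast
  qed
  then show ?thesis using \<delta>(1) by blast
qed

lemma space_LebN: "space (LebN n) = Rn n"
  by (simp add: LebN_def Rn_def space_PiM)

lemma measurable_ident_LebN: "(\<lambda>x. x) \<in> borel_measurable (LebN n)"
proof (rule measurable_coordinatewise_then_product)
  fix i
  show "(\<lambda>x. x i) \<in> borel_measurable (LebN n)"
  proof (cases "i < n")
    case True
    then have "(\<lambda>x. x i) \<in> measurable (LebN n) lborel"
      unfolding LebN_def by (intro measurable_component_singleton) auto
    then show ?thesis by (simp add: measurable_lborel2)
  next
    case False
    have "(\<lambda>x. undefined :: real) \<in> borel_measurable (LebN n)" by simp
    then show ?thesis
      by (rule measurable_cong[THEN iffD1, rotated]) (use False in \<open>auto simp: space_LebN Rn_iff\<close>)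
  qed
qed

lemma closed_in_sets_LebN: "closed S \<Longrightarrow> S \<subseteq> Rn n \<Longrightarrow> S \<in> sets (LebN n)"
  using measurable_sets[OF measurable_ident_LebN borel_closed, of S n]
  by (simp add: space_LebN Int_absorb2)

lemma minkc_eq_image:
  "minkc n l A B = (\<lambda>p. vplus n (vscale n l (fst p)) (vscale n (1 - l) (snd p))) ` (A \<times> B)"
  unfolding minkc_def image_def by force

lemma compact_minkc: "compact A \<Longrightarrow> compact B \<Longrightarrow> compact (minkc n l A B)"
  unfolding minkc_eq_image
proof (intro compact_continuous_image compact_Times continuous_on_coordinatewise_then_product)
  have coord: "continuous_on S (\<lambda>p. fst p i)" "continuous_on S (\<lambda>p. snd p i)"
    for S :: "((nat \<Rightarrow> real) \<times> (nat \<Rightarrow> real)) set" and i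
    by (auto intro!: continuous_on_compose2[OF continuous_on_product_coordinates]
        continuous_on_fst continuous_on_snd continuous_on_id)
  fix i
  show "continuous_on (A \<times> B) (\<lambda>p. vplus n (vscale n l (fst p)) (vscale n (1 - l) (snd p)) i)"
    unfolding vplus_apply vscale_apply
    by (cases "i < n") (auto intro!: continuous_intros coord)
qed

lemma minkc_subset_Rn: "minkc n l A B \<subseteq> Rn n"
  by (auto simp: minkc_def)

section \<open>The norm with unit ball \<open>K\<close>\<close>

lemma nonneg_eqI_by_pos_upper_bounds:
  fixes a b :: real
  assumes "0 \<le> a" "0 \<le> b" "\<And>t. t > 0 \<Longrightarrow> a \<le> t \<longleftrightarrow> b \<le> t"
  shows "a = b"
proof (rule ccontr)
  assume "a \<noteq> b"
  then have "(a + b) / 2 > 0" "a \<le> (a + b) / 2 \<longleftrightarrow> \<not> b \<le> (a + b) / 2"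
    using assms(1,2) by auto
  then show False using assms(3) by blast
qed

locale symmetric_convex_body =
  fixes n :: nat and K :: "(nat \<Rightarrow> real) set"
  assumes sym_convex_body: "sym_convex_body n K"
begin

lemma K_subset_Rn: "K \<subseteq> Rn n"
  and compact_K: "compact K"
  and K_nonempty: "K \<noteq> {}"
  and K_symmetric: "x \<in> K \<Longrightarrow> vscale n (-1) x \<in> K"
  and K_convex: "x \<in> K \<Longrightarrow> y \<in> K \<Longrightarrow> 0 \<le> t \<Longrightarrow> t \<le> 1 \<Longrightarrow>
                 vplus n (vscale n t x) (vscale n (1 - t) y) \<in> K"
  using sym_convex_body by (auto simp: sym_convex_body_def convexN_def)

lemma vzero_in_K: "vzero n \<in> K"
proof -
  obtain x where x: "x \<in> K" using K_nonempty by auto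
  have "vplus n (vscale n (1/2) x) (vscale n (1 - 1/2) (vscale n (-1) x)) \<in> K"
    by (intro K_convex x K_symmetric) auto
  also have "vplus n (vscale n (1/2) x) (vscale n (1 - 1/2) (vscale n (-1) x)) = vzero n"
    by (rule Rn_eqI[where n=n]) (auto simp: vplus_apply vscale_apply vzero_apply)
  finally show ?thesis .
qed

lemma vscale_in_K:
  assumes "x \<in> K" "0 \<le> t" "t \<le> 1"
  shows "vscale n t x \<in> K"
proof -
  have "vplus n (vscale n t x) (vscale n (1 - t) (vzero n)) = vscale n t x"
    by (rule Rn_eqI[where n=n]) (auto simp: vplus_apply vscale_apply vzero_apply)
  then show ?thesis using K_convex[OF assms(1) vzero_in_K assms(2,3)] by simp
qed

lemma ex_l1_ball_subset_K: "\<exists>r>0. \<forall>y\<in>Rn n. l1_norm n y \<le> r \<longrightarrow> y \<in> K"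
proof -
  obtain U where U: "openin (top_of_set (Rn n)) U" "U \<noteq> {}" "U \<subseteq> K"
    using sym_convex_body by (auto simp: sym_convex_body_def)
  obtain u where u: "u \<in> U" using U(2) by auto
  obtain \<delta> where \<delta>: "\<delta> > 0" "\<forall>y\<in>Rn n. (\<Sum>i<n. \<bar>y i - u i\<bar>) < \<delta> \<longrightarrow> y \<in> U"
    using openin_Rn_contains_l1_ball[OF U(1) u] by auto
  show ?thesis
  proof (intro exI[of _ "\<delta>/2"] conjI ballI impI)
    show "\<delta>/2 > 0" using \<delta> by auto
    fix y assume y: "y \<in> Rn n" "l1_norm n y \<le> \<delta>/2"
    have "(\<Sum>i<n. \<bar>vplus n u y i - u i\<bar>) = l1_norm n y"
      by (simp add: l1_norm_def vplus_apply)
    then have plus: "vplus n u y \<in> K" using \<delta> y U(3) by auto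
    have "(\<Sum>i<n. \<bar>vplus n u (vscale n (-1) y) i - u i\<bar>) = l1_norm n y"
      by (simp add: l1_norm_def vplus_apply vscale_apply)
    then have minus: "vplus n u (vscale n (-1) y) \<in> K" using \<delta> y U(3) by auto
    have "vplus n (vscale n (1/2) (vplus n u y))
            (vscale n (1 - 1/2) (vscale n (-1) (vplus n u (vscale n (-1) y)))) \<in> K"
      by (intro K_convex plus K_symmetric minus) auto
    also have "vplus n (vscale n (1/2) (vplus n u y))
            (vscale n (1 - 1/2) (vscale n (-1) (vplus n u (vscale n (-1) y)))) = y"
      by (rule Rn_eqI[where n=n]) (use y(1) in \<open>auto simp: vplus_apply vscale_apply field_simps\<close>)
    finally show "y \<in> K" .
  qed
qed

lemma ex_l1_bound_K: "\<exists>R>0. \<forall>x\<in>K. l1_norm n x \<le> R"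
proof -
  have "compact (l1_norm n ` K)"
    by (intro compact_continuous_image continuous_on_l1_norm compact_K)
  then obtain B where "\<forall>x\<in>K. \<bar>l1_norm n x\<bar> \<le> B"
    by (auto dest!: compact_imp_bounded simp: bounded_real)
  then show ?thesis by (intro exI[of _ "max B 1"]) force
qed

definition "l1_inradius = (SOME r. r > 0 \<and> (\<forall>y\<in>Rn n. l1_norm n y \<le> r \<longrightarrow> y \<in> K))"

definition "l1_outradius = (SOME R. R > 0 \<and> (\<forall>x\<in>K. l1_norm n x \<le> R))"

lemma l1_inradius_pos: "l1_inradius > 0"
  and mem_K_if_l1_norm_le: "y \<in> Rn n \<Longrightarrow> l1_norm n y \<le> l1_inradius \<Longrightarrow> y \<in> K"
  using someI_ex[OF ex_l1_ball_subset_K] unfolding l1_inradius_def by auto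

lemma l1_outradius_pos: "l1_outradius > 0"
  and l1_norm_le_outradius: "x \<in> K \<Longrightarrow> l1_norm n x \<le> l1_outradius"
  using someI_ex[OF ex_l1_bound_K] unfolding l1_outradius_def by auto

lemma mem_dilate_iff: "t > 0 \<Longrightarrow> x \<in> vscale n t ` K \<longleftrightarrow> x \<in> Rn n \<and> vscale n (1/t) x \<in> K"
proof
  assume t: "t > 0" and "x \<in> vscale n t ` K"
  then obtain k where k: "k \<in> K" "x = vscale n t k" by auto
  then have "vscale n (1/t) x = k" using t K_subset_Rn by (auto simp: vscale_one)
  then show "x \<in> Rn n \<and> vscale n (1/t) x \<in> K" using k by auto
next
  assume t: "t > 0" and x: "x \<in> Rn n \<and> vscale n (1/t) x \<in> K"
  then have "vscale n t (vscale n (1/t) x) = x" by (simp add: vscale_one)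
  then show "x \<in> vscale n t ` K" using x by (metis image_eqI)
qed

lemma mem_dilate_if_l1_norm_le:
  "x \<in> Rn n \<Longrightarrow> t > 0 \<Longrightarrow> l1_norm n x \<le> t * l1_inradius \<Longrightarrow> x \<in> vscale n t ` K"
  by (subst mem_dilate_iff) (auto intro!: mem_K_if_l1_norm_le simp: l1_norm_vscale field_simps)

lemma l1_norm_le_if_mem_dilate: "x \<in> vscale n t ` K \<Longrightarrow> t > 0 \<Longrightarrow> l1_norm n x \<le> t * l1_outradius"
  using l1_norm_le_outradius by (auto simp: l1_norm_vscale)

lemma dilate_mono: "x \<in> vscale n s ` K \<Longrightarrow> 0 < s \<Longrightarrow> s \<le> t \<Longrightarrow> x \<in> vscale n t ` K"
proof -
  assume st: "x \<in> vscale n s ` K" "0 < s" "s \<le> t"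
  then have x: "x \<in> Rn n" "vscale n (1/s) x \<in> K" using mem_dilate_iff[of s x] by blast+
  have "vscale n (s/t) (vscale n (1/s) x) \<in> K" by (rule vscale_in_K[OF x(2)]) (use st in auto)
  then show ?thesis using st x by (subst mem_dilate_iff) auto
qed

lemma closed_scalars_into_K: "closed {c. vscale n c x \<in> K}"
  using continuous_closed_vimage[OF compact_imp_closed[OF compact_K], of "\<lambda>c. vscale n c x"]
    continuous_on_vscale_scalar[of UNIV n x]
  by (auto simp: continuous_on_eq_continuous_at vimage_def)

lemma dilates_containing_nonempty:
  assumes x: "x \<in> Rn n"
  shows "{t. 0 < t \<and> x \<in> vscale n t ` K} \<noteq> {}"
proof -
  define t where "t = l1_norm n x / l1_inradius + 1"
  have t: "t > 0"
    using l1_inradius_pos l1_norm_nonneg[of n x] by (simp add: t_def add_nonneg_pos)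
  have "l1_norm n x \<le> t * l1_inradius" using l1_inradius_pos by (simp add: t_def field_simps)
  then show ?thesis using mem_dilate_if_l1_norm_le[OF x t] t by blast
qed

lemma normK_nonneg: "x \<in> Rn n \<Longrightarrow> 0 \<le> normK n K x"
  unfolding normK_def
proof (rule cInf_greatest)
  show "x \<in> Rn n \<Longrightarrow> {t. 0 < t \<and> x \<in> vscale n t ` K} \<noteq> {}"
    by (rule dilates_containing_nonempty)
qed auto

text \<open>The infimum defining \<open>normK\<close> is attained, since \<open>K\<close> is closed.\<close>

lemma normK_le_iff:
  assumes x: "x \<in> Rn n" and t: "t > 0"
  shows "normK n K x \<le> t \<longleftrightarrow> x \<in> vscale n t ` K"
proof
  assume "x \<in> vscale n t ` K"
  then show "normK n K x \<le> t"
    unfolding normK_def using t by (intro cInf_lower) (auto intro: bdd_belowI[of _ 0])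
next
  define S where "S = {t. 0 < t \<and> x \<in> vscale n t ` K}"
  assume le: "normK n K x \<le> t"
  have S_nonempty: "S \<noteq> {}" unfolding S_def by (rule dilates_containing_nonempty[OF x])
  have "vscale n c x \<in> K" if c: "c \<in> {0<..<1/t}" for c
  proof -
    have "Inf S \<le> t" using le by (simp add: normK_def S_def)
    also have "t < 1/c" using c t by (simp add: field_simps)
    finally have "Inf S < 1/c" .
    then obtain u where "u \<in> S" "u < 1/c" using cInf_lessD[OF S_nonempty] by blast
    then have "x \<in> vscale n (1/c) ` K" using dilate_mono[of x u "1/c"] by (auto simp: S_def)
    then show ?thesis using c mem_dilate_iff[of "1/c" x] by auto
  qed
  then have "closure {0<..<1/t} \<subseteq> {c. vscale n c x \<in> K}"
    by (intro closure_minimal closed_scalars_into_K) auto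
  then have "{0..1/t} \<subseteq> {c. vscale n c x \<in> K}" using t by simp
  then have "1/t \<in> {c. vscale n c x \<in> K}" by (rule subsetD) (use t in simp)
  then have "vscale n (1/t) x \<in> K" by simp
  then show "x \<in> vscale n t ` K" using t x by (subst mem_dilate_iff) auto
qed

lemma normK_le_l1_norm: "x \<in> Rn n \<Longrightarrow> normK n K x \<le> l1_norm n x / l1_inradius"
proof (rule field_le_epsilon)
  fix e :: real assume x: "x \<in> Rn n" and e: "e > 0"
  have pos: "l1_norm n x / l1_inradius + e > 0"
    using l1_norm_nonneg[of n x] l1_inradius_pos e by (auto intro: add_nonneg_pos)
  then have "x \<in> vscale n (l1_norm n x / l1_inradius + e) ` K"
    using x e l1_inradius_pos by (intro mem_dilate_if_l1_norm_le) (auto simp: field_simps)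
  then show "normK n K x \<le> l1_norm n x / l1_inradius + e" using normK_le_iff[OF x pos] by blast
qed

lemma l1_norm_le_normK: "x \<in> Rn n \<Longrightarrow> l1_norm n x \<le> l1_outradius * normK n K x"
proof (rule field_le_epsilon)
  fix e :: real assume x: "x \<in> Rn n" and e: "e > 0"
  define t where "t = normK n K x + e / l1_outradius"
  have t: "t > 0" using normK_nonneg[OF x] e l1_outradius_pos by (simp add: t_def add_nonneg_pos)
  have "x \<in> vscale n t ` K" using normK_le_iff[OF x t] e l1_outradius_pos by (auto simp: t_def)
  then have "l1_norm n x \<le> t * l1_outradius" using t by (rule l1_norm_le_if_mem_dilate)
  also have "\<dots> = l1_outradius * normK n K x + e" using l1_outradius_pos by (simp add: t_def field_simps)
  finally show "l1_norm n x \<le> l1_outradius * normK n K x + e" .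
qed

lemma normK_eq_0_iff: "x \<in> Rn n \<Longrightarrow> normK n K x = 0 \<longleftrightarrow> x = vzero n"
proof
  assume x: "x \<in> Rn n" and "normK n K x = 0"
  then have "l1_norm n x \<le> 0" using l1_norm_le_normK[OF x] by simp
  then show "x = vzero n" using l1_norm_nonneg[of n x] l1_norm_eq_0_iff[OF x] by simp
next
  assume "x = vzero n"
  then show "normK n K x = 0"
    using normK_le_l1_norm[of x] normK_nonneg[of x] l1_norm_eq_0_iff[of x n] by simp
qed

lemma normK_triangle:
  assumes x: "x \<in> Rn n" and y: "y \<in> Rn n"
  shows "normK n K (vplus n x y) \<le> normK n K x + normK n K y"
proof (rule field_le_epsilon)
  fix e :: real assume e: "e > 0"
  define a where "a = normK n K x + e/2"
  define b where "b = normK n K y + e/2"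
  have a: "a > 0" and b: "b > 0" using normK_nonneg[OF x] normK_nonneg[OF y] e
    by (auto simp: a_def b_def)
  have "x \<in> vscale n a ` K" using normK_le_iff[OF x a] e by (simp add: a_def)
  then have xa: "vscale n (1/a) x \<in> K" using mem_dilate_iff[OF a] by blast
  have "y \<in> vscale n b ` K" using normK_le_iff[OF y b] e by (simp add: b_def)
  then have yb: "vscale n (1/b) y \<in> K" using mem_dilate_iff[OF b] by blast
  have comb: "a/(a+b) * (1/a * u) + (1 - a/(a+b)) * (1/b * v) = 1/(a+b) * (u + v)" for u v
  proof -
    have "1 - a/(a+b) = b/(a+b)" using a b by (simp add: field_simps)
    then have "(1 - a/(a+b)) * (1/b * v) = v/(a+b)" using b by simp
    moreover have "a/(a+b) * (1/a * u) = u/(a+b)" using a by simp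
    ultimately show ?thesis by (simp add: add_divide_distrib[symmetric])
  qed
  have "vplus n (vscale n (a/(a+b)) (vscale n (1/a) x)) (vscale n (1 - a/(a+b)) (vscale n (1/b) y)) \<in> K"
    using a b by (intro K_convex xa yb) auto
  also have "vplus n (vscale n (a/(a+b)) (vscale n (1/a) x)) (vscale n (1 - a/(a+b)) (vscale n (1/b) y))
      = vscale n (1/(a+b)) (vplus n x y)"
  proof (intro Rn_eqI[where n=n])
    fix i assume "i < n"
    then show "vplus n (vscale n (a/(a+b)) (vscale n (1/a) x)) (vscale n (1 - a/(a+b)) (vscale n (1/b) y)) i
      = vscale n (1/(a+b)) (vplus n x y) i"
      unfolding vplus_apply vscale_apply by (simp only: if_True comb)
  qed auto
  finally have "vplus n x y \<in> vscale n (a+b) ` K" using a b by (subst mem_dilate_iff) auto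
  then have "normK n K (vplus n x y) \<le> a + b" using normK_le_iff[of "vplus n x y" "a+b"] a b by auto
  then show "normK n K (vplus n x y) \<le> normK n K x + normK n K y + e" by (simp add: a_def b_def)
qed

lemma normK_vscale_pos:
  assumes x: "x \<in> Rn n" and c: "c > 0"
  shows "normK n K (vscale n c x) = c * normK n K x"
proof (rule nonneg_eqI_by_pos_upper_bounds)
  show "0 \<le> normK n K (vscale n c x)" "0 \<le> c * normK n K x"
    using c normK_nonneg[OF x] normK_nonneg[of "vscale n c x"] by simp_all
  fix t :: real assume t: "t > 0"
  have "normK n K (vscale n c x) \<le> t \<longleftrightarrow> vscale n (c/t) x \<in> K"
    using t normK_le_iff[of "vscale n c x" t] mem_dilate_iff[of t "vscale n c x"] by simp
  also have "\<dots> \<longleftrightarrow> normK n K x \<le> t / c"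
    using t c x normK_le_iff[of x "t/c"] mem_dilate_iff[of "t/c" x] by simp
  also have "\<dots> \<longleftrightarrow> c * normK n K x \<le> t" using c by (simp add: field_simps)
  finally show "normK n K (vscale n c x) \<le> t \<longleftrightarrow> c * normK n K x \<le> t" .
qed

lemma normK_uminus:
  assumes x: "x \<in> Rn n"
  shows "normK n K (vscale n (-1) x) = normK n K x"
proof (rule nonneg_eqI_by_pos_upper_bounds)
  show "0 \<le> normK n K (vscale n (-1) x)" "0 \<le> normK n K x"
    using normK_nonneg[OF x] normK_nonneg[of "vscale n (-1) x"] by simp_all
  fix t :: real assume t: "t > 0"
  have "vscale n (-1/t) x \<in> K \<longleftrightarrow> vscale n (1/t) x \<in> K"
    using K_symmetric[of "vscale n (-1/t) x"] K_symmetric[of "vscale n (1/t) x"] by auto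
  then show "normK n K (vscale n (-1) x) \<le> t \<longleftrightarrow> normK n K x \<le> t"
    using t x by (simp add: normK_le_iff mem_dilate_iff)
qed

lemma normK_vscale:
  assumes x: "x \<in> Rn n"
  shows "normK n K (vscale n c x) = \<bar>c\<bar> * normK n K x"
proof -
  consider "c > 0" | "c = 0" | "c < 0" by linarith
  then show ?thesis
  proof cases
    case 3
    have "normK n K (vscale n c x) = normK n K (vscale n (-c) x)"
      using normK_uminus[of "vscale n (-c) x"] by simp
    then show ?thesis using 3 normK_vscale_pos[OF x, of "-c"] by simp
  qed (use normK_vscale_pos[OF x] normK_eq_0_iff[of "vzero n"] in \<open>auto simp: vscale_zero\<close>)
qed

lemma normK_lipschitz:
  assumes x: "x \<in> Rn n" and y: "y \<in> Rn n"
  shows "\<bar>normK n K y - normK n K x\<bar> \<le> (\<Sum>i<n. \<bar>y i - x i\<bar>) / l1_inradius"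
proof -
  define w where "w = vplus n y (vscale n (-1) x)"
  have w: "w \<in> Rn n" by (simp add: w_def)
  have "y = vplus n x w" using y by (intro Rn_eqI[where n=n]) (auto simp: w_def vplus_apply vscale_apply)
  then have "normK n K y \<le> normK n K x + normK n K w" using normK_triangle[OF x w] by simp
  moreover have "x = vplus n y (vscale n (-1) w)"
    using x by (intro Rn_eqI[where n=n]) (auto simp: w_def vplus_apply vscale_apply)
  then have "normK n K x \<le> normK n K y + normK n K w"
    using normK_triangle[OF y, of "vscale n (-1) w"] normK_uminus[OF w] by simp
  moreover have "normK n K w \<le> (\<Sum>i<n. \<bar>y i - x i\<bar>) / l1_inradius"
    using normK_le_l1_norm[OF w] by (simp add: w_def l1_norm_def vplus_apply vscale_apply)
  ultimately show ?thesis by auto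
qed

lemma continuous_on_normK: "continuous_on (Rn n) (normK n K)"
  unfolding continuous_on_topological
proof (intro ballI allI impI)
  fix x B assume x: "x \<in> Rn n" and B: "open B" "normK n K x \<in> B"
  obtain e where e: "e > 0" "ball (normK n K x) e \<subseteq> B" using B open_contains_ball by blast
  define A where "A = {y. (\<Sum>i<n. \<bar>y i - x i\<bar>) < e * l1_inradius}"
  have "open A" unfolding A_def
    by (intro open_Collect_less continuous_intros
        continuous_on_subset[OF continuous_on_product_coordinates]) auto
  moreover have "x \<in> A" using e l1_inradius_pos by (simp add: A_def)
  moreover have "normK n K y \<in> B" if "y \<in> Rn n" "y \<in> A" for y
  proof -
    have "(\<Sum>i<n. \<bar>y i - x i\<bar>) / l1_inradius < e"
      using that(2) l1_inradius_pos by (simp add: A_def pos_divide_less_eq)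
    then have "\<bar>normK n K y - normK n K x\<bar> < e" using normK_lipschitz[OF x that(1)] by linarith
    then show ?thesis using e by (auto simp: dist_real_def)
  qed
  ultimately show "\<exists>A. open A \<and> x \<in> A \<and> (\<forall>y\<in>Rn n. y \<in> A \<longrightarrow> normK n K y \<in> B)" by blast
qed

lemma compact_dilate: "compact (vscale n t ` K)"
  by (intro compact_continuous_image continuous_on_vscale compact_K)

lemma compact_shell:
  assumes b: "b > 0"
  shows "compact {x\<in>Rn n. a \<le> normK n K x \<and> normK n K x \<le> b}"
proof -
  have "{x\<in>Rn n. a \<le> normK n K x \<and> normK n K x \<le> b} = vscale n b ` K \<inter> normK n K -` {a..b}"
    using normK_le_iff[OF _ b] by auto
  moreover have "closedin (top_of_set (vscale n b ` K)) (vscale n b ` K \<inter> normK n K -` {a..b})"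
    by (rule continuous_closedin_preimage) (auto intro: continuous_on_subset[OF continuous_on_normK])
  ultimately show ?thesis using closedin_compact compact_dilate by metis
qed

end

section \<open>Log-concave functions on the line\<close>

lemma concave_segment_le_tangent:
  fixes \<phi> :: "real \<Rightarrow> real"
  assumes deriv: "(\<phi> has_real_derivative d) (at x0)"
    and concave: "\<And>l. 0 < l \<Longrightarrow> l < 1 \<Longrightarrow> l * \<phi> y + (1 - l) * \<phi> x0 \<le> \<phi> (l * y + (1 - l) * x0)"
  shows "\<phi> y \<le> \<phi> x0 + d * (y - x0)"
proof (cases "y = x0")
  case False
  define h where "h = y - x0"
  have h: "h \<noteq> 0" using False by (simp add: h_def)
  have quotient: "((\<lambda>t. (\<phi> (x0 + t) - \<phi> x0) / t) \<longlongrightarrow> d) (at 0)"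
    using deriv unfolding DERIV_def by simp
  have small: "\<forall>\<^sub>F l in at_right (0::real). 0 < l \<and> l < 1"
    unfolding eventually_at_right_field by (intro exI[of _ 1]) auto
  have "filterlim (\<lambda>l. l * h) (at 0) (at_right 0)"
  proof (rule filterlim_atI)
    show "((\<lambda>l. l * h) \<longlongrightarrow> 0) (at_right 0)"
      by (rule tendsto_eq_intros) (auto intro: tendsto_ident_at)
    show "\<forall>\<^sub>F l in at_right 0. l * h \<noteq> 0"
      using small by eventually_elim (use h in auto)
  qed
  then have "((\<lambda>l. (\<phi> (x0 + l * h) - \<phi> x0) / (l * h) * h) \<longlongrightarrow> d * h) (at_right 0)"
    by (intro tendsto_mult tendsto_const filterlim_compose[OF quotient])
  moreover have "\<forall>\<^sub>F l in at_right 0. \<phi> y - \<phi> x0 \<le> (\<phi> (x0 + l * h) - \<phi> x0) / (l * h) * h"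
    using small
  proof eventually_elim
    case (elim l)
    then have "l * (\<phi> y - \<phi> x0) \<le> \<phi> (x0 + l * h) - \<phi> x0"
      using concave[of l] by (simp add: h_def algebra_simps)
    then have "(\<phi> y - \<phi> x0) * l \<le> \<phi> (x0 + l * h) - \<phi> x0" by (simp add: mult.commute)
    then have "\<phi> y - \<phi> x0 \<le> (\<phi> (x0 + l * h) - \<phi> x0) / l"
      using elim by (simp add: pos_le_divide_eq)
    also have "\<dots> = (\<phi> (x0 + l * h) - \<phi> x0) / (l * h) * h"
      using elim h by simp
    finally show ?case .
  qed
  ultimately have "\<phi> y - \<phi> x0 \<le> d * h" by (rule tendsto_lowerbound) simp
  then show ?thesis by (simp add: h_def)
qed simp

lemma log_concave_le_tangent:
  fixes g :: "real \<Rightarrow> real"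
  assumes deriv: "(g has_real_derivative D) (at x0)" and pos: "0 < g x0" and nonneg: "0 \<le> g y"
    and concave: "\<And>l. 0 < l \<Longrightarrow> l < 1 \<Longrightarrow> g y powr l * g x0 powr (1 - l) \<le> g (l * y + (1 - l) * x0)"
  shows "g y \<le> g x0 * exp (D / g x0 * (y - x0))"
proof (cases "g y = 0")
  case False
  then have gy: "g y > 0" using nonneg by simp
  have "ln (g y) \<le> ln (g x0) + D / g x0 * (y - x0)"
  proof (rule concave_segment_le_tangent[where \<phi>="\<lambda>x. ln (g x)"])
    show "((\<lambda>x. ln (g x)) has_real_derivative D / g x0) (at x0)"
      using DERIV_chain2[OF DERIV_ln_divide[OF pos] deriv] by simp
    fix l :: real assume l: "0 < l" "l < 1"
    have "l * ln (g y) + (1 - l) * ln (g x0) = ln (g y powr l * g x0 powr (1 - l))"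
      using gy pos by (simp add: ln_mult ln_powr)
    also have "\<dots> \<le> ln (g (l * y + (1 - l) * x0))"
    proof (subst ln_le_cancel_iff)
      show "0 < g y powr l * g x0 powr (1 - l)" using gy pos by simp
      then show "0 < g (l * y + (1 - l) * x0)" using concave[OF l] by linarith
    qed (use concave[OF l] in simp)
    finally show "l * ln (g y) + (1 - l) * ln (g x0) \<le> ln (g (l * y + (1 - l) * x0))" .
  qed
  then have "exp (ln (g y)) \<le> exp (ln (g x0) + D / g x0 * (y - x0))" by simp
  then show ?thesis using gy pos by (simp add: exp_add)
qed (use pos in simp)

lemma log_concave_funD:
  "log_concave_fun g \<Longrightarrow> 0 < l \<Longrightarrow> l < 1 \<Longrightarrow> g u powr l * g v powr (1 - l) \<le> g (l * u + (1 - l) * v)"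
  and log_concave_fun_nonneg: "log_concave_fun g \<Longrightarrow> 0 \<le> g x"
  by (simp_all add: log_concave_fun_def)

lemma log_concave_fun_le_tangent:
  assumes "log_concave_fun g" "(g has_real_derivative D) (at x0)" "0 < g x0"
  shows "g y \<le> g x0 * exp (D / g x0 * (y - x0))"
  using assms by (intro log_concave_le_tangent log_concave_funD log_concave_fun_nonneg)

lemma concave_three_point_extrapolation:
  fixes l a x0 x1 x2 p0 p1 p2 :: real
  assumes l: "0 < l" "l < 1" and x2: "x2 = l * x1 + (1 - l) * x0"
    and chord: "l * p1 + (1 - l) * p0 \<le> p2" and tangent: "p2 \<le> p0 + a * (x2 - x0)"
  shows "p1 \<le> p2 + a * (x1 - x2)"
proof -
  have shift: "(1 - l) * (x2 - x0) = l * (x1 - x2)" by (simp add: x2 algebra_simps)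
  have "l * p1 \<le> p2 - (1 - l) * p0" using chord by linarith
  also have "\<dots> \<le> p2 - (1 - l) * (p2 - a * (x2 - x0))"
    using tangent l by (simp add: mult_left_mono)
  also have "\<dots> = l * p2 + a * ((1 - l) * (x2 - x0))" by (simp add: algebra_simps)
  also have "\<dots> = l * (p2 + a * (x1 - x2))" unfolding shift by (simp add: algebra_simps)
  finally show ?thesis using l by simp
qed

lemma log_concave_fun_le_slope:
  assumes lc: "log_concave_fun g" and deriv: "(g has_real_derivative D) (at x0)"
    and pos: "0 < g x0" and x: "x1 < x2" "x2 \<le> x0"
  shows "g x1 \<le> g x2 * exp (D / g x0 * (x1 - x2))"
proof (cases "x2 = x0 \<or> g x1 = 0")
  case True
  then show ?thesis
    using log_concave_fun_le_tangent[OF assms(1-3), of x1] log_concave_fun_nonneg[OF lc, of x2] by auto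
next
  case False
  define a where "a = D / g x0"
  define l where "l = (x0 - x2) / (x0 - x1)"
  have l: "0 < l" "l < 1" using x False by (auto simp: l_def field_simps)
  have "l * x1 + (1 - l) * x0 = x0 - l * (x0 - x1)" by (simp add: algebra_simps)
  also have "\<dots> = x2" using x by (simp add: l_def)
  finally have x2_eq: "x2 = l * x1 + (1 - l) * x0" ..
  have g1: "g x1 > 0" using False log_concave_fun_nonneg[OF lc, of x1] by simp
  have chord: "g x1 powr l * g x0 powr (1 - l) \<le> g x2"
    using log_concave_funD[OF lc l, of x1 x0] x2_eq by simp
  have "0 < g x1 powr l * g x0 powr (1 - l)" using g1 pos by simp
  then have g2: "g x2 > 0" using chord by linarith
  have "l * ln (g x1) + (1 - l) * ln (g x0) = ln (g x1 powr l * g x0 powr (1 - l))"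
    using g1 pos by (simp add: ln_mult ln_powr)
  also have "\<dots> \<le> ln (g x2)" using chord g1 g2 pos by (subst ln_le_cancel_iff) auto
  finally have concave: "l * ln (g x1) + (1 - l) * ln (g x0) \<le> ln (g x2)" .
  have "g x2 \<le> g x0 * exp (a * (x2 - x0))"
    unfolding a_def by (rule log_concave_fun_le_tangent[OF lc deriv pos])
  then have "ln (g x2) \<le> ln (g x0 * exp (a * (x2 - x0)))" using g2 by (subst ln_le_cancel_iff) auto
  then have tangent: "ln (g x2) \<le> ln (g x0) + a * (x2 - x0)" using pos by (simp add: ln_mult)
  have "ln (g x1) \<le> ln (g x2) + a * (x1 - x2)"
    using concave_three_point_extrapolation[OF l x2_eq concave tangent] .
  then have "exp (ln (g x1)) \<le> exp (ln (g x2) + a * (x1 - x2))" by simp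
  then show ?thesis using g1 g2 by (simp add: exp_add a_def)
qed

section \<open>The distribution function of the norm\<close>

locale log_concave_norm = symmetric_convex_body +
  fixes \<mu> :: "(nat \<Rightarrow> real) measure"
  assumes log_concave: "log_concave_measure n \<mu>"
begin

lemma prob_space_mu: "prob_space \<mu>" and sets_mu: "sets \<mu> = sets (LebN n)"
  using log_concave by (auto simp: log_concave_measure_def)

sublocale P: prob_space \<mu> by (rule prob_space_mu)

lemma space_mu: "space \<mu> = Rn n"
  using sets_eq_imp_space_eq[OF sets_mu] by (simp add: space_LebN)

lemma compact_in_sets: "compact S \<Longrightarrow> S \<subseteq> Rn n \<Longrightarrow> S \<in> sets \<mu>"
  unfolding sets_mu by (intro closed_in_sets_LebN compact_imp_closed)

lemma dilate_in_sets: "vscale n t ` K \<in> sets \<mu>"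
  by (intro compact_in_sets compact_dilate) auto

lemma measure_minkc_ge:
  assumes "compact A" "compact B" "A \<noteq> {}" "B \<noteq> {}" "A \<subseteq> Rn n" "B \<subseteq> Rn n" "0 < l" "l < 1"
  shows "measure \<mu> A powr l * measure \<mu> B powr (1 - l) \<le> measure \<mu> (minkc n l A B)"
proof -
  have "A \<in> sets \<mu>" "B \<in> sets \<mu>" "minkc n l A B \<in> sets \<mu>"
    using assms by (auto intro!: compact_in_sets compact_minkc minkc_subset_Rn)
  then show ?thesis using log_concave assms unfolding log_concave_measure_def by blast
qed

lemma borel_measurable_normK [measurable]: "normK n K \<in> borel_measurable \<mu>"
  unfolding borel_measurable_iff_le
proof
  fix a :: real
  consider "a < 0" | "a = 0" | "a > 0" by linarith
  then show "{x \<in> space \<mu>. normK n K x \<le> a} \<in> sets \<mu>"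
  proof cases
    case 1
    then have "{x \<in> space \<mu>. normK n K x \<le> a} = {}"
      using normK_nonneg by (force simp: space_mu)
    then show ?thesis by (metis sets.empty_sets)
  next
    case 2
    then have "{x \<in> space \<mu>. normK n K x \<le> a} = {vzero n}"
      using normK_nonneg normK_eq_0_iff by (force simp: space_mu)
    then show ?thesis by (simp add: compact_in_sets)
  next
    case 3
    then have "{x \<in> space \<mu>. normK n K x \<le> a} = vscale n a ` K"
      using normK_le_iff[OF _ 3] by (auto simp: space_mu)
    then show ?thesis using dilate_in_sets by simp
  qed
qed

lemma FK_eq_measure_dilate: "t > 0 \<Longrightarrow> FK n \<mu> K t = measure \<mu> (vscale n t ` K)"
  unfolding FK_def using normK_le_iff by (intro arg_cong[where f="measure \<mu>"]) (auto simp: space_mu)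

lemma measure_K_eq_FK: "measure \<mu> K = FK n \<mu> K 1"
proof -
  have "vscale n 1 ` K = K" using K_subset_Rn vscale_one by (auto simp: image_iff subset_eq)
  then show ?thesis using FK_eq_measure_dilate[of 1] by simp
qed

lemma FK_mono: "s \<le> t \<Longrightarrow> FK n \<mu> K s \<le> FK n \<mu> K t"
  unfolding FK_def by (intro P.finite_measure_mono) auto

lemma FK_nonneg: "0 \<le> FK n \<mu> K t"
  by (simp add: FK_def)

lemma real_distribution_normK: "real_distribution (distr \<mu> borel (normK n K))"
  by (intro P.real_distribution_distr) simp

lemma FK_eq_cdf: "FK n \<mu> K = cdf (distr \<mu> borel (normK n K))"
  by (auto simp: fun_eq_iff FK_def cdf_def measure_distr vimage_def Int_def conj_commute)

lemma minkc_dilates_subset: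
  assumes s: "s > 0" and t: "t > 0" and l: "0 < l" "l < 1"
  shows "minkc n l (vscale n s ` K) (vscale n t ` K) \<subseteq> vscale n (l * s + (1 - l) * t) ` K"
proof
  fix z assume "z \<in> minkc n l (vscale n s ` K) (vscale n t ` K)"
  then obtain k1 k2 where k: "k1 \<in> K" "k2 \<in> K"
    "z = vplus n (vscale n l (vscale n s k1)) (vscale n (1 - l) (vscale n t k2))"
    by (auto simp: minkc_def)
  define u where "u = l * s + (1 - l) * t"
  have u: "u > 0" using s t l by (auto simp: u_def intro: add_pos_pos)
  have "vplus n (vscale n (l * s / u) k1) (vscale n (1 - l * s / u) k2) \<in> K"
    using s t l u by (intro K_convex k) (auto simp: u_def field_simps)
  also have "vplus n (vscale n (l * s / u) k1) (vscale n (1 - l * s / u) k2) = vscale n (1/u) z"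
  proof (intro Rn_eqI[where n=n])
    fix i assume i: "i < n"
    have e: "1 - l * s / u = (1 - l) * t / u" using u by (simp add: u_def field_simps)
    show "vplus n (vscale n (l * s / u) k1) (vscale n (1 - l * s / u) k2) i = vscale n (1/u) z i"
      unfolding k(3) vplus_apply vscale_apply if_P[OF i] e
      using u by (simp add: add_divide_distrib[symmetric] algebra_simps)
  qed auto
  finally show "z \<in> vscale n (l * s + (1 - l) * t) ` K"
    using u by (subst mem_dilate_iff) (auto simp: u_def k(3))
qed

lemma FK_log_concave:
  assumes s: "s > 0" and t: "t > 0" and l: "0 < l" "l < 1"
  shows "FK n \<mu> K s powr l * FK n \<mu> K t powr (1 - l) \<le> FK n \<mu> K (l * s + (1 - l) * t)"
proof -
  have "measure \<mu> (vscale n s ` K) powr l * measure \<mu> (vscale n t ` K) powr (1 - l)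
      \<le> measure \<mu> (minkc n l (vscale n s ` K) (vscale n t ` K))"
    using l K_nonempty by (intro measure_minkc_ge compact_dilate) auto
  also have "\<dots> \<le> measure \<mu> (vscale n (l * s + (1 - l) * t) ` K)"
    by (intro P.finite_measure_mono minkc_dilates_subset s t l dilate_in_sets)
  finally show ?thesis
    using FK_eq_measure_dilate s t l by (simp add: add_pos_pos)
qed

definition shell :: "real \<Rightarrow> real \<Rightarrow> (nat \<Rightarrow> real) set" where
  "shell a b = {x \<in> space \<mu>. a \<le> normK n K x \<and> normK n K x \<le> b}"

lemma shell_in_sets [measurable]: "shell a b \<in> sets \<mu>"
  unfolding shell_def by measurable

lemma minkc_dilate_shell_subset:
  assumes s: "s > 0"
  shows "minkc n (1/2) (vscale n s ` K) (shell a b) \<subseteq> shell ((a - s) / 2) ((b + s) / 2)"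
proof
  fix z assume "z \<in> minkc n (1/2) (vscale n s ` K) (shell a b)"
  then obtain x y where xy: "x \<in> vscale n s ` K" "y \<in> shell a b"
    and z: "z = vplus n (vscale n (1/2) x) (vscale n (1/2) y)"
    by (auto simp: minkc_def)
  have x: "x \<in> Rn n" and y: "y \<in> Rn n" using xy by (auto simp: shell_def space_mu)
  have nx: "normK n K x \<le> s" using xy(1) normK_le_iff[OF x s] by simp
  have ny: "a \<le> normK n K y" "normK n K y \<le> b" using xy(2) by (auto simp: shell_def)
  have "normK n K z \<le> normK n K (vscale n (1/2) x) + normK n K (vscale n (1/2) y)"
    unfolding z by (rule normK_triangle) auto
  then have upper: "normK n K z \<le> (b + s) / 2" using nx ny normK_vscale x y by simp
  have "vscale n (1/2) y = vplus n z (vscale n (-1) (vscale n (1/2) x))"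
    using y by (intro Rn_eqI[where n=n]) (auto simp: z vplus_apply vscale_apply)
  then have "normK n K (vscale n (1/2) y) \<le> normK n K z + normK n K (vscale n (-1) (vscale n (1/2) x))"
    using normK_triangle[of z "vscale n (-1) (vscale n (1/2) x)"] z by simp
  then have lower: "(a - s) / 2 \<le> normK n K z" using nx ny normK_vscale x y by simp
  show "z \<in> shell ((a - s) / 2) ((b + s) / 2)"
    using upper lower z by (simp add: shell_def space_mu)
qed

lemma measure_shell_mult_FK_le:
  assumes s: "s > 0" and b: "b > 0"
  shows "measure \<mu> (shell a b) * FK n \<mu> K s \<le> (measure \<mu> (shell ((a - s) / 2) ((b + s) / 2)))\<^sup>2"
proof (cases "shell a b = {}")
  case False
  have shell: "compact (shell a b)" "shell a b \<subseteq> Rn n"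
    using compact_shell[OF b, of a] by (auto simp: shell_def space_mu)
  have "sqrt (measure \<mu> (shell a b) * FK n \<mu> K s)
      = measure \<mu> (vscale n s ` K) powr (1/2) * measure \<mu> (shell a b) powr (1 - 1/2)"
    using FK_eq_measure_dilate[OF s] by (simp add: powr_half_sqrt real_sqrt_mult mult.commute)
  also have "\<dots> \<le> measure \<mu> (minkc n (1/2) (vscale n s ` K) (shell a b))"
    using False shell K_nonempty by (intro measure_minkc_ge compact_dilate) auto
  also have "\<dots> \<le> measure \<mu> (shell ((a - s) / 2) ((b + s) / 2))"
    by (intro P.finite_measure_mono minkc_dilate_shell_subset s) simp
  finally show ?thesis by (rule sqrt_le_D)
qed simp

end

section \<open>The tangent bound at the median\<close>

locale norm_median = log_concave_norm +
  fixes m f :: real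
  assumes median: "is_median n \<mu> K m"
    and FK_deriv: "(FK n \<mu> K has_real_derivative f) (at m)"
begin

lemma measure_normK_eq_median: "measure \<mu> {x \<in> space \<mu>. normK n K x = m} = 0"
proof -
  interpret D: real_distribution "distr \<mu> borel (normK n K)"
    by (rule real_distribution_normK)
  have "isCont (cdf (distr \<mu> borel (normK n K))) m"
    using DERIV_isCont[OF FK_deriv] by (simp add: FK_eq_cdf)
  then have "measure (distr \<mu> borel (normK n K)) {m} = 0" by (simp add: D.isCont_cdf)
  then show ?thesis by (simp add: measure_distr vimage_def Int_def conj_commute)
qed

lemma FK_median: "FK n \<mu> K m = 1/2"
proof -
  have "{x \<in> space \<mu>. m \<le> normK n K x} =
      (space \<mu> - {x \<in> space \<mu>. normK n K x \<le> m}) \<union> {x \<in> space \<mu>. normK n K x = m}"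
    by auto
  then have "measure \<mu> {x \<in> space \<mu>. m \<le> normK n K x}
      \<le> measure \<mu> (space \<mu> - {x \<in> space \<mu>. normK n K x \<le> m}) + measure \<mu> {x \<in> space \<mu>. normK n K x = m}"
    by (simp add: measure_Un_le)
  also have "\<dots> = 1 - FK n \<mu> K m"
    by (simp add: measure_normK_eq_median P.prob_compl FK_def)
  finally show ?thesis using median by (simp add: is_median_def FK_def)
qed

lemma median_pos: "m > 0"
proof (rule ccontr)
  assume "\<not> m > 0"
  then have "{x \<in> space \<mu>. normK n K x \<le> m} \<subseteq> {x \<in> space \<mu>. normK n K x = m}"
    using normK_nonneg by (force simp: space_mu)
  then have "FK n \<mu> K m \<le> measure \<mu> {x \<in> space \<mu>. normK n K x = m}"
    unfolding FK_def by (rule P.finite_measure_mono) measurable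
  then show False using FK_median measure_normK_eq_median by simp
qed

lemma FK_deriv_nonneg: "f \<ge> 0"
proof (rule ccontr)
  assume "\<not> f \<ge> 0"
  then obtain d where "d > 0" "\<forall>h>0. h < d \<longrightarrow> FK n \<mu> K m > FK n \<mu> K (m + h)"
    using DERIV_neg_dec_right[OF FK_deriv] by force
  then have "FK n \<mu> K m > FK n \<mu> K (m + d/2)" by auto
  then show False using FK_mono[of m "m + d/2"] \<open>d > 0\<close> by simp
qed

lemma FK_le_tangent:
  assumes "y > 0"
  shows "FK n \<mu> K y \<le> 1/2 * exp (2 * f * (y - m))"
proof -
  have "FK n \<mu> K y \<le> FK n \<mu> K m * exp (f / FK n \<mu> K m * (y - m))"
    using assms median_pos FK_median
    by (intro log_concave_le_tangent[OF FK_deriv] FK_nonneg FK_log_concave) auto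
  then show ?thesis by (simp add: FK_median mult_ac)
qed

lemma FK_deriv_pos: "f > 0"
proof (rule ccontr)
  assume "\<not> f > 0"
  then have "f = 0" using FK_deriv_nonneg by simp
  then have le: "FK n \<mu> K y \<le> 1/2" if "y > 0" for y using FK_le_tangent[OF that] by simp
  have "(FK n \<mu> K \<longlongrightarrow> 1) at_top"
    unfolding FK_eq_cdf by (rule real_distribution.cdf_lim_at_top_prob[OF real_distribution_normK])
  then have "\<forall>\<^sub>F y in at_top. (1/2::real) < FK n \<mu> K y"
    by (rule order_tendstoD) simp
  then have "\<forall>\<^sub>F y in at_top. 0 < y \<and> 1/2 < FK n \<mu> K y"
    by (intro eventually_conj eventually_gt_at_top)
  then obtain N where "\<forall>y\<ge>N. 0 < y \<and> 1/2 < FK n \<mu> K y"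
    unfolding eventually_at_top_linorder by blast
  then show False using le[of N] by auto

qed

lemma FK_lower_deviation_le:
  assumes "0 < \<epsilon>" "\<epsilon> < 1"
  shows "FK n \<mu> K ((1 - \<epsilon>) * m) \<le> 1/2 * exp (- 2 * \<epsilon> * (m * f))"
  using FK_le_tangent[of "(1 - \<epsilon>) * m"] assms median_pos by (simp add: algebra_simps)

lemma measure_upper_tail_ge: "measure \<mu> {x \<in> space \<mu>. m + 1/(8*f) < normK n K x} \<ge> 1/4"
proof -
  have "FK n \<mu> K (m + 1/(8*f)) \<le> 1/2 * exp (2 * f * (m + 1/(8*f) - m))"
    using median_pos FK_deriv_pos by (intro FK_le_tangent add_pos_pos) auto
  also have "2 * f * (m + 1/(8*f) - m) = 1/4" using FK_deriv_pos by simp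
  also have "exp (1/4 :: real) \<le> 1 + 2 * (1/4)" by (rule real_exp_bound_lemma) auto
  finally have "FK n \<mu> K (m + 1/(8*f)) \<le> 3/4" by simp
  moreover have "{x \<in> space \<mu>. m + 1/(8*f) < normK n K x}
      = space \<mu> - {x \<in> space \<mu>. normK n K x \<le> m + 1/(8*f)}"
    by auto
  ultimately show ?thesis by (simp add: P.prob_compl FK_def)
qed

lemma mean_abs_deviation_ge:
  assumes "integrable \<mu> (\<lambda>x. \<bar>normK n K x - m\<bar>)"
  shows "(\<integral>x. \<bar>normK n K x - m\<bar> \<partial>\<mu>) \<ge> 1 / (32 * f)"
proof -
  have "1/4 \<le> measure \<mu> {x \<in> space \<mu>. m + 1/(8*f) < normK n K x}"
    by (rule measure_upper_tail_ge)
  also have "\<dots> \<le> measure \<mu> {x \<in> space \<mu>. \<bar>normK n K x - m\<bar> \<ge> 1/(8*f)}"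
    using FK_deriv_pos by (intro P.finite_measure_mono) auto
  also have "\<dots> \<le> (\<integral>x. \<bar>normK n K x - m\<bar> \<partial>\<mu>) / (1/(8*f))"
    using FK_deriv_pos by (intro integral_Markov_inequality_measure[OF assms]) auto
  finally show ?thesis using FK_deriv_pos by (simp add: field_simps)
qed

lemma FK_deriv_ge_mean_abs_deviation: "1 / (16 * (\<integral>x. \<bar>normK n K x - m\<bar> \<partial>\<mu>)) \<le> 2 * f"
proof (cases "integrable \<mu> (\<lambda>x. \<bar>normK n K x - m\<bar>)")
  case True
  define E where "E = (\<integral>x. \<bar>normK n K x - m\<bar> \<partial>\<mu>)"
  have E: "1 / (32 * f) \<le> E" using mean_abs_deviation_ge[OF True] by (simp add: E_def)
  moreover have "0 < 1 / (32 * f)" using FK_deriv_pos by simp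
  ultimately have "0 < E" by linarith
  with E show ?thesis using FK_deriv_pos unfolding E_def[symmetric] by (simp add: field_simps)
next
  case False
  then show ?thesis using FK_deriv_nonneg by (simp add: not_integrable_integral_eq)
qed

lemma measure_far_from_point_ge: "measure \<mu> {x \<in> space \<mu>. (1/(16*f))\<^sup>2 \<le> (normK n K x - c)\<^sup>2} \<ge> 1/4"
proof -
  define d where "d = 1/(16*f)"
  have d: "d > 0" "1/(8*f) = 2 * d" using FK_deriv_pos by (simp_all add: d_def)
  have far: "x \<in> {x \<in> space \<mu>. d\<^sup>2 \<le> (normK n K x - c)\<^sup>2}"
    if "x \<in> space \<mu>" "d \<le> \<bar>normK n K x - c\<bar>" for x
    using that d power_mono[of d "\<bar>normK n K x - c\<bar>" 2] by simp
  consider "c \<le> m + d" | "m + d < c" by linarith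
  then have "1/4 \<le> measure \<mu> {x \<in> space \<mu>. d\<^sup>2 \<le> (normK n K x - c)\<^sup>2}"
  proof cases
    case 1
    have "1/4 \<le> measure \<mu> {x \<in> space \<mu>. m + 1/(8*f) < normK n K x}"
      by (rule measure_upper_tail_ge)
    also have "\<dots> \<le> measure \<mu> {x \<in> space \<mu>. d\<^sup>2 \<le> (normK n K x - c)\<^sup>2}"
      using 1 d by (intro P.finite_measure_mono subsetI far) auto
    finally show ?thesis .
  next
    case 2
    have "1/4 \<le> FK n \<mu> K m" using FK_median by simp
    also have "\<dots> \<le> measure \<mu> {x \<in> space \<mu>. d\<^sup>2 \<le> (normK n K x - c)\<^sup>2}"
      unfolding FK_def using 2 by (intro P.finite_measure_mono subsetI far) auto
    finally show ?thesis .
  qed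
  then show ?thesis by (simp add: d_def)
qed

lemma second_moment_ge:
  assumes "integrable \<mu> (\<lambda>x. (normK n K x - c)\<^sup>2)"
  shows "(\<integral>x. (normK n K x - c)\<^sup>2 \<partial>\<mu>) \<ge> (1 / (32 * f))\<^sup>2"
proof -
  have "1/4 \<le> measure \<mu> {x \<in> space \<mu>. (1/(16*f))\<^sup>2 \<le> (normK n K x - c)\<^sup>2}"
    by (rule measure_far_from_point_ge)
  also have "\<dots> \<le> (\<integral>x. (normK n K x - c)\<^sup>2 \<partial>\<mu>) / (1/(16*f))\<^sup>2"
    using FK_deriv_pos by (intro integral_Markov_inequality_measure[OF assms, where A="{}"]) auto
  finally show ?thesis using FK_deriv_pos by (simp add: field_simps power2_eq_square)
qed

end

section \<open>The B-property\<close>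

context norm_median
begin

lemma log_concave_FK_exp:
  assumes "B_property n \<mu> K"
  shows "log_concave_fun (\<lambda>t. FK n \<mu> K (exp t))"
  using assms by (simp add: B_property_def FK_eq_measure_dilate)

lemma FK_exp_deriv: "((\<lambda>t. FK n \<mu> K (exp t)) has_real_derivative f * m) (at (ln m))"
proof -
  have "(FK n \<mu> K has_real_derivative f) (at (exp (ln m)))" using FK_deriv median_pos by simp
  from DERIV_chain2[OF this DERIV_exp] show ?thesis using median_pos by simp
qed

lemma FK_exp_at_ln_median: "FK n \<mu> K (exp (ln m)) = 1/2"
  using FK_median median_pos by simp

lemma FK_small_ball_le:
  assumes B: "B_property n \<mu> K" and \<epsilon>: "0 < \<epsilon>" "\<epsilon> < 1"
  shows "FK n \<mu> K (\<epsilon> * m) \<le> 1/2 * \<epsilon> powr (2 * (m * f))"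
proof -
  have "FK n \<mu> K (exp (ln (\<epsilon> * m)))
      \<le> FK n \<mu> K (exp (ln m)) * exp (f * m / FK n \<mu> K (exp (ln m)) * (ln (\<epsilon> * m) - ln m))"
    using FK_exp_at_ln_median
    by (intro log_concave_fun_le_tangent[OF log_concave_FK_exp[OF B] FK_exp_deriv]) simp
  also have "\<dots> = 1/2 * \<epsilon> powr (2 * (m * f))"
    using \<epsilon> median_pos by (simp add: FK_median ln_mult powr_def mult_ac)
  finally show ?thesis using \<epsilon> median_pos by simp
qed

lemma FK_deriv_eq_0_if_median_lt_1:
  assumes K: "measure \<mu> K \<le> 1/2" and m: "m < 1"
  shows "f = 0"
proof (rule ccontr)
  assume "f \<noteq> 0"
  then have "f > 0" using FK_deriv_nonneg by simp
  then obtain d where d: "d > 0" "\<forall>h>0. h < d \<longrightarrow> FK n \<mu> K m < FK n \<mu> K (m + h)"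
    using DERIV_pos_inc_right[OF FK_deriv] by blast
  define h where "h = min (d/2) ((1 - m)/2)"
  have "h \<le> (1 - m)/2" unfolding h_def by (rule min.cobounded2)
  then have h: "0 < h" "h < d" "m + h \<le> 1" using d m by (auto simp: h_def)

  have "1/2 < FK n \<mu> K (m + h)" using d h FK_median by auto
  also have "\<dots> \<le> FK n \<mu> K 1" using h by (intro FK_mono) auto
  also have "\<dots> \<le> 1/2" using K measure_K_eq_FK by simp
  finally show False by simp
qed

lemma measure_dilate_le:
  assumes B: "B_property n \<mu> K" and K: "measure \<mu> K \<le> 1/2" and \<epsilon>: "0 < \<epsilon>" "\<epsilon> < 1"
  shows "measure \<mu> (vscale n \<epsilon> ` K) \<le> \<epsilon> powr (2 * f) * measure \<mu> K"
proof (cases "m < 1")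
  case True
  then have "f = 0" using FK_deriv_eq_0_if_median_lt_1 K by simp
  then show ?thesis using \<epsilon> FK_mono[of \<epsilon> 1] by (simp add: FK_eq_measure_dilate measure_K_eq_FK)
next
  case False
  let ?G = "\<lambda>t. FK n \<mu> K (exp t)"
  have G: "?G (ln \<epsilon>) = measure \<mu> (vscale n \<epsilon> ` K)" "?G 0 = measure \<mu> K"
    using \<epsilon> by (simp_all add: FK_eq_measure_dilate measure_K_eq_FK)
  have ln: "ln \<epsilon> < 0" "0 \<le> ln m" using \<epsilon> False by simp_all
  have "?G (ln \<epsilon>) \<le> ?G 0 * exp (f * m / ?G (ln m) * (ln \<epsilon> - 0))"
    using ln FK_exp_at_ln_median
    by (intro log_concave_fun_le_slope[OF log_concave_FK_exp[OF B] FK_exp_deriv]) simp_all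
  also have "\<dots> \<le> ?G 0 * exp (2 * f * ln \<epsilon>)"
  proof -
    have "2 * f * ln \<epsilon> * m \<le> 2 * f * ln \<epsilon> * 1"
      using False ln FK_deriv_nonneg by (intro mult_left_mono_neg) (auto simp: mult_nonneg_nonpos)
    then show ?thesis using FK_nonneg by (intro mult_left_mono) (auto simp: FK_exp_at_ln_median mult_ac)
  qed
  also have "exp (2 * f * ln \<epsilon>) = \<epsilon> powr (2 * f)" using \<epsilon> by (simp add: powr_def mult_ac)
  finally show ?thesis unfolding G by (simp add: mult_ac)
qed

end

section \<open>A Borell-type bound for the mean of the norm\<close>

lemma pair_sum_contracts:
  fixes a b c d :: real
  assumes nonneg: "0 \<le> a" "0 \<le> b" "0 \<le> c"
    and c: "c \<le> 2 * (a + b)\<^sup>2" and d: "d \<le> 2 * (b + c)\<^sup>2" and small: "a + b \<le> 1/64"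
  shows "c + d \<le> (a + b) / 8"
proof -
  define r where "r = a + b"
  have r: "0 \<le> r" "r \<le> 1/64" using nonneg small by (auto simp: r_def)
  have rr: "r * r \<le> r / 64" using mult_left_mono[OF r(2) r(1)] by simp
  have c2: "c \<le> 2 * (r * r)" using c by (simp add: r_def power2_eq_square)
  then have "b + c \<le> 3/2 * r" using rr nonneg by (simp add: r_def)
  then have "(b + c)\<^sup>2 \<le> (3/2 * r)\<^sup>2" using nonneg by (intro power_mono) auto
  then have "d \<le> 9/2 * (r * r)" using d by (simp add: power2_eq_square)
  then have "c + d \<le> 13/2 * (r * r)" using c2 by simp
  also have "\<dots> \<le> r / 8" using rr r by simp
  finally show ?thesis by (simp add: r_def)
qed

lemma ennreal_term_le_suminf: "(f :: nat \<Rightarrow> ennreal) k \<le> (\<Sum>i. f i)"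
  using sum_le_suminf[OF summableI, of "{k}" f] by simp

context norm_median
begin

definition dyadic_radius
 :: "nat \<Rightarrow> real" where
  "dyadic_radius j = m * (2 + 2 ^ j)"

definition dyadic_mass :: "nat \<Rightarrow> real" where
  "dyadic_mass j = measure \<mu> (shell (dyadic_radius j) (dyadic_radius (Suc j)))"

lemma dyadic_radius_pos: "dyadic_radius j > 0"
  using median_pos by (simp add: dyadic_radius_def add_pos_pos)

lemma dyadic_radius_less: "i < j \<Longrightarrow> dyadic_radius i < dyadic_radius j"
  using median_pos by (simp add: dyadic_radius_def)

lemma dyadic_radius_le: "i \<le> j \<Longrightarrow> dyadic_radius i \<le> dyadic_radius j"
  using median_pos by (simp add: dyadic_radius_def)

lemma dyadic_radius_unbounded: "\<exists>k. X \<le> dyadic_radius k"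
proof -
  obtain k where "X / m < 2 ^ k" using real_arch_pow[of 2 "X / m"] by auto
  then have "X \<le> m * 2 ^ k" using median_pos by (simp add: field_simps)
  also have "\<dots> \<le> dyadic_radius k" using median_pos by (simp add: dyadic_radius_def)
  finally show ?thesis ..
qed

lemma dyadic_mass_nonneg: "0 \<le> dyadic_mass j"
  by (simp add: dyadic_mass_def)

text \<open>Log-concavity applied to \<open>mK\<close> and the shell \<open>j + 2\<close>: the middle shell sits inside shells
  \<open>j\<close> and \<open>j + 1\<close>, and \<open>F m = 1/2\<close>.\<close>

lemma dyadic_mass_recurrence:
  assumes j: "1 \<le> j"
  shows "dyadic_mass (j + 2) \<le> 2 * (dyadic_mass j + dyadic_mass (j + 1))\<^sup>2"
proof -
  let ?r = dyadic_radius
  have "(2::real) \<le> 2 ^ j" using power_increasing[OF j, of "2::real"] by simp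
  then have lower: "?r j \<le> (?r (j + 2) - m) / 2"
    using median_pos by (simp add: dyadic_radius_def field_simps power_add)
  have upper: "(?r (j + 3) + m) / 2 \<le> ?r (j + 2)"
    using median_pos by (simp add: dyadic_radius_def field_simps power_add)
  have "dyadic_mass (j + 2) * (1/2) = measure \<mu> (shell (?r (j + 2)) (?r (j + 3))) * FK n \<mu> K m"
    by (simp add: dyadic_mass_def FK_median numeral_3_eq_3)
  also have "\<dots> \<le> (measure \<mu> (shell ((?r (j + 2) - m) / 2) ((?r (j + 3) + m) / 2)))\<^sup>2"
    by (rule measure_shell_mult_FK_le[OF median_pos dyadic_radius_pos])
  also have "\<dots> \<le> (dyadic_mass j + dyadic_mass (j + 1))\<^sup>2"
  proof (intro power_mono)
    have "shell ((?r (j + 2) - m) / 2) ((?r (j + 3) + m) / 2)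
        \<subseteq> shell (?r j) (?r (Suc j)) \<union> shell (?r (j + 1)) (?r (Suc (j + 1)))"
      using lower upper by (auto simp: shell_def)
    then have "measure \<mu> (shell ((?r (j + 2) - m) / 2) ((?r (j + 3) + m) / 2))
        \<le> measure \<mu> (shell (?r j) (?r (Suc j)) \<union> shell (?r (j + 1)) (?r (Suc (j + 1))))"
      by (intro P.finite_measure_mono) auto
    also have "\<dots> \<le> dyadic_mass j + dyadic_mass (j + 1)"
      unfolding dyadic_mass_def by (rule measure_Un_le) auto
    finally show "measure \<mu> (shell ((?r (j + 2) - m) / 2) ((?r (j + 3) + m) / 2))
        \<le> dyadic_mass j + dyadic_mass (j + 1)" .
  qed simp
  finally show ?thesis by simp
qed

lemma dyadic_mass_decay:
  assumes j0: "1 \<le> j0" and small: "dyadic_mass j0 + dyadic_mass (j0 + 1) \<le> 1/64"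
  shows "dyadic_mass (j0 + 2 * k) + dyadic_mass (j0 + 2 * k + 1) \<le> (1/8) ^ k / 64"
proof (induction k)
  case (Suc k)
  define j where "j = j0 + 2 * k"
  have j: "1 \<le> j" using j0 by (simp add: j_def)
  have IH: "dyadic_mass j + dyadic_mass (j + 1) \<le> (1/8) ^ k / 64" using Suc by (simp add: j_def)
  also have "\<dots> \<le> 1/64" by (simp add: power_le_one)
  finally have "dyadic_mass j + dyadic_mass (j + 1) \<le> 1/64" .
  then have "dyadic_mass (j + 2) + dyadic_mass (j + 3) \<le> (dyadic_mass j + dyadic_mass (j + 1)) / 8"
    using dyadic_mass_recurrence[OF j] dyadic_mass_recurrence[of "j + 1"] j
    by (intro pair_sum_contracts dyadic_mass_nonneg) (simp_all add: numeral_3_eq_3)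
  also have "\<dots> \<le> (1/8) ^ Suc k / 64" using IH by simp
  finally show ?case by (simp add: j_def numeral_3_eq_3 algebra_simps)
qed (use small in simp)

lemma sum_alternate_dyadic_mass_le_1: "(\<Sum>k<N. dyadic_mass (a + 2 * k)) \<le> 1"
proof -
  have "disjoint_family_on (\<lambda>k. shell (dyadic_radius (a + 2 * k)) (dyadic_radius (Suc (a + 2 * k)))) {..<N}"
    unfolding disjoint_family_on_def
  proof (intro ballI impI)
    fix k k' :: nat assume "k \<noteq> k'"
    then have "Suc (a + 2 * min k k') < a + 2 * max k k'" by auto
    then have "dyadic_radius (Suc (a + 2 * min k k')) < dyadic_radius (a + 2 * max k k')"
      by (rule dyadic_radius_less)
    then show "shell (dyadic_radius (a + 2 * k)) (dyadic_radius (Suc (a + 2 * k)))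
        \<inter> shell (dyadic_radius (a + 2 * k')) (dyadic_radius (Suc (a + 2 * k'))) = {}"
      by (cases "k \<le> k'") (auto simp: shell_def min_def max_def)
  qed
  then have "(\<Sum>k<N. dyadic_mass (a + 2 * k))
      = measure \<mu> (\<Union>k<N. shell (dyadic_radius (a + 2 * k)) (dyadic_radius (Suc (a + 2 * k))))"
    unfolding dyadic_mass_def by (intro P.finite_measure_finite_Union[symmetric]) auto
  also have "\<dots> \<le> 1" by simp
  finally show ?thesis .
qed

lemma ex_small_dyadic_pair: "\<exists>k<128. dyadic_mass (1 + 2 * k) + dyadic_mass (1 + 2 * k + 1) \<le> 1/64"
proof (rule ccontr)
  assume "\<not> ?thesis"
  then have "(\<Sum>k<128::nat. 1/64::real) < (\<Sum>k<128. dyadic_mass (1 + 2 * k) + dyadic_mass (1 + 2 * k + 1))"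
    by (intro sum_strict_mono) (auto simp: not_le lessThan_empty_iff)
  also have "\<dots> = (\<Sum>k<128. dyadic_mass (1 + 2 * k)) + (\<Sum>k<128. dyadic_mass (2 + 2 * k))"
    by (simp add: sum.distrib add.commute add.left_commute)
  also have "\<dots> \<le> 1 + 1" by (intro add_mono sum_alternate_dyadic_mass_le_1)
  finally show False by simp
qed

definition dyadic_pair :: "nat \<Rightarrow> (nat \<Rightarrow> real) set" where
  "dyadic_pair j = shell (dyadic_radius j) (dyadic_radius (j + 2))"

lemma dyadic_pair_in_sets [measurable]: "dyadic_pair j \<in> sets \<mu>"
  by (simp add: dyadic_pair_def)

lemma measure_dyadic_pair_le: "measure \<mu> (dyadic_pair j) \<le> dyadic_mass j + dyadic_mass (j + 1)"
proof -
  have "dyadic_pair j \<subseteq> shell (dyadic_radius j) (dyadic_radius (Suc j))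
      \<union> shell (dyadic_radius (j + 1)) (dyadic_radius (Suc (j + 1)))"
    by (auto simp: dyadic_pair_def shell_def)
  then have "measure \<mu> (dyadic_pair j) \<le> measure \<mu> (shell (dyadic_radius j) (dyadic_radius (Suc j))
      \<union> shell (dyadic_radius (j + 1)) (dyadic_radius (Suc (j + 1))))"
    by (intro P.finite_measure_mono) auto
  also have "\<dots> \<le> dyadic_mass j + dyadic_mass (j + 1)"
    unfolding dyadic_mass_def by (rule measure_Un_le) auto
  finally show ?thesis .

qed

lemma normK_le_dyadic_pair_series:
  assumes x: "x \<in> space \<mu>"
  shows "ennreal (normK n K x) \<le> ennreal (dyadic_radius j0) +
    (\<Sum>k. ennreal (dyadic_radius (j0 + 2 * k + 2)) * indicator (dyadic_pair (j0 + 2 * k)) x)"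
    (is "_ \<le> _ + (\<Sum>k. ?t k)")
proof (cases "normK n K x \<le> dyadic_radius j0")
  case True
  then show ?thesis by (simp add: add_increasing2 ennreal_leI)
next
  case False
  let ?P = "\<lambda>k. normK n K x \<le> dyadic_radius (j0 + 2 * k + 2)"
  define k where "k = (LEAST k. ?P k)"
  have "\<exists>k. ?P k"
  proof -
    obtain k where "normK n K x \<le> dyadic_radius k" using dyadic_radius_unbounded by blast
    also have "\<dots> \<le> dyadic_radius (j0 + 2 * k + 2)" by (rule dyadic_radius_le) simp
    finally show ?thesis by blast
  qed
  then have upper: "?P k" unfolding k_def by (rule LeastI_ex)
  have lower: "dyadic_radius (j0 + 2 * k) \<le> normK n K x"
  proof (cases k)
    case (Suc k')
    then have "\<not> ?P k'" using not_less_Least[of k' ?P] by (simp add: k_def)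
    then show ?thesis using Suc by simp
  qed (use False in simp)
  have "ennreal (normK n K x) \<le> ?t k"
    using x upper lower by (simp add: ennreal_leI dyadic_pair_def shell_def)
  also have "\<dots> \<le> (\<Sum>k. ?t k)" by (rule ennreal_term_le_suminf)
  also have "\<dots> \<le> ennreal (dyadic_radius j0) + (\<Sum>k. ?t k)" by simp
  finally show ?thesis .
qed

lemma dyadic_radius_mult_pair_le:
  assumes decay: "dyadic_mass (j0 + 2 * k) + dyadic_mass (j0 + 2 * k + 1) \<le> (1/8) ^ k / 64"
  shows "dyadic_radius (j0 + 2 * k + 2) * measure \<mu> (dyadic_pair (j0 + 2 * k))
    \<le> m * 2 ^ (j0 + 3) / 64 * (1/2) ^ k"
proof -
  have "(2::real) \<le> 2 ^ (j0 + 2 * k + 2)" using power_increasing[of 1 "j0 + 2 * k + 2" "2::real"] by simp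
  then have "dyadic_radius (j0 + 2 * k + 2) \<le> m * 2 ^ (j0 + 3) * 4 ^ k"
    using median_pos by (simp add: dyadic_radius_def power_add power_mult)
  moreover have "measure \<mu> (dyadic_pair (j0 + 2 * k)) \<le> (1/8) ^ k / 64"
    using measure_dyadic_pair_le[of "j0 + 2 * k"] decay by simp
  ultimately have "dyadic_radius (j0 + 2 * k + 2) * measure \<mu> (dyadic_pair (j0 + 2 * k))
      \<le> m * 2 ^ (j0 + 3) * 4 ^ k * ((1/8) ^ k / 64)"
    using dyadic_radius_pos median_pos by (intro mult_mono) (auto intro: less_imp_le)
  also have "\<dots> = m * 2 ^ (j0 + 3) / 64 * (4 ^ k * (1/8) ^ k)" by simp
  also have "(4::real) ^ k * (1/8) ^ k = (1/2) ^ k" by (simp flip: power_mult_distrib)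
  finally show ?thesis .

qed

lemma nn_integral_normK_le:
  assumes j0: "1 \<le> j0"
    and decay: "\<And>k. dyadic_mass (j0 + 2 * k) + dyadic_mass (j0 + 2 * k + 1) \<le> (1/8) ^ k / 64"
  shows "(\<integral>\<^sup>+x. normK n K x \<partial>\<mu>) \<le> ennreal (m * 2 ^ (j0 + 2))"
proof -
  let ?r = dyadic_radius and ?c = "m * 2 ^ (j0 + 3) / 64"
  have "(\<integral>\<^sup>+x. normK n K x \<partial>\<mu>)
      \<le> (\<integral>\<^sup>+x. ennreal (?r j0) + (\<Sum>k. ennreal (?r (j0 + 2 * k + 2)) * indicator (dyadic_pair (j0 + 2 * k)) x) \<partial>\<mu>)"
    by (intro nn_integral_mono normK_le_dyadic_pair_series)
  also have "\<dots> = ennreal (?r j0) + (\<Sum>k. ennreal (?r (j0 + 2 * k + 2) * measure \<mu> (dyadic_pair (j0 + 2 * k))))"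
    using dyadic_radius_pos[THEN less_imp_le]
    by (simp add: nn_integral_add nn_integral_suminf nn_integral_cmult_indicator
        P.emeasure_space_1 P.emeasure_eq_measure P.prob_space ennreal_mult)

  also have "\<dots> \<le> ennreal (?r j0) + (\<Sum>k. ennreal (?c * (1/2) ^ k))"
    by (intro add_left_mono suminf_le summableI ennreal_leI dyadic_radius_mult_pair_le decay)
  also have "(\<Sum>k. ennreal (?c * (1/2) ^ k)) = ennreal (?c * 2)"
    using median_pos geometric_sums[of "1/2::real"]
    by (intro suminf_ennreal_eq) (auto dest: sums_mult[where c="?c"])
  also have "ennreal (?r j0) + ennreal (?c * 2) = ennreal (?r j0 + ?c * 2)"
    using median_pos dyadic_radius_pos[of j0] by (intro ennreal_plus[symmetric]) auto
  also have "?r j0 + ?c * 2 \<le> m * 2 ^ (j0 + 2)"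
  proof -
    have "(2::real) \<le> 2 ^ j0" using power_increasing[OF j0, of "2::real"] by simp
    then show ?thesis using median_pos by (simp add: dyadic_radius_def power_add field_simps)
  qed
  finally show ?thesis by (simp add: ennreal_leI)
qed

lemma integral_normK_le:
  assumes "integrable \<mu> (normK n K)"
  shows "(\<integral>x. normK n K x \<partial>\<mu>) \<le> 2 ^ 257 * m"
proof -
  obtain k0 where k0: "k0 < 128" "dyadic_mass (1 + 2 * k0) + dyadic_mass (1 + 2 * k0 + 1) \<le> 1/64"
    using ex_small_dyadic_pair by blast
  define j0 where "j0 = 1 + 2 * k0"
  have j0: "1 \<le> j0" "j0 + 2 \<le> 257" using k0 by (auto simp: j0_def)
  have "ennreal (\<integral>x. normK n K x \<partial>\<mu>) = (\<integral>\<^sup>+x. normK n K x \<partial>\<mu>)"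
    using assms normK_nonneg by (intro nn_integral_eq_integral[symmetric]) (auto simp: space_mu)
  also have "\<dots> \<le> ennreal (m * 2 ^ (j0 + 2))"
    using dyadic_mass_decay[OF j0(1)] k0 by (intro nn_integral_normK_le j0) (simp add: j0_def)
  finally have "(\<integral>x. normK n K x \<partial>\<mu>) \<le> m * 2 ^ (j0 + 2)"
    using median_pos by (simp add: ennreal_le_iff)
  also have "\<dots> \<le> m * 2 ^ 257" using median_pos j0 by (intro mult_left_mono power_increasing) auto
  finally show ?thesis by (simp add: mult.commute)
qed

end

section \<open>Comparison with \<open>\<beta>\<close>\<close>

lemma (in norm_median) inverse_sqrt_beta_le: "1 / (16 * 2 ^ 257) / sqrt (betaK n \<mu> K) \<le> 2 * (m * f)"
proof (cases "betaK n \<mu> K > 0")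
  case False
  then have "1 / (16 * 2 ^ 257) / sqrt (betaK n \<mu> K) \<le> 0" by (simp add: divide_nonneg_nonpos)
  moreover have "0 \<le> 2 * (m * f)" using median_pos FK_deriv_nonneg by simp
  ultimately show ?thesis by linarith

next
  case True
  define E where "E = (\<integral>x. normK n K x \<partial>\<mu>)"
  define V where "V = (\<integral>x. (normK n K x - E)\<^sup>2 \<partial>\<mu>)"
  have beta: "betaK n \<mu> K = V / E\<^sup>2" by (simp add: betaK_def E_def V_def Let_def)
  then have "E \<noteq> 0" "V \<noteq> 0" using True by auto
  then have int_E: "integrable \<mu> (normK n K)" and int_V: "integrable \<mu> (\<lambda>x. (normK n K x - E)\<^sup>2)"
    unfolding E_def V_def by (metis not_integrable_integral_eq)+
  have "E \<ge> 0" unfolding E_def by (intro integral_nonneg_AE AE_I2) (simp add: space_mu normK_nonneg)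
  then have E_pos: "E > 0" using \<open>E \<noteq> 0\<close> by simp
  have sqrt_V: "1 / (32 * f) \<le> sqrt V"
    using real_sqrt_le_mono[OF second_moment_ge[OF int_V]] FK_deriv_pos unfolding V_def by simp
  moreover have "0 < 1 / (32 * f)" using FK_deriv_pos by simp
  ultimately have sqrt_V_pos: "0 < sqrt V" by linarith
  have "1 / (16 * 2 ^ 257) / sqrt (betaK n \<mu> K) = E / (16 * 2 ^ 257) / sqrt V"
    using E_pos by (simp add: beta real_sqrt_divide)
  also have "\<dots> \<le> m / 16 / sqrt V"
  proof (rule divide_right_mono)
    show "E / (16 * 2 ^ 257) \<le> m / 16"
      using integral_normK_le[OF int_E] by (simp add: E_def field_simps)
    show "0 \<le> sqrt V" unfolding V_def by (intro real_sqrt_ge_zero integral_nonneg_AE AE_I2) simp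
  qed

  also have "\<dots> \<le> m / 16 / (1 / (32 * f))"
    using sqrt_V sqrt_V_pos median_pos FK_deriv_pos by (intro divide_left_mono) auto

  also have "\<dots> = 2 * (m * f)" by simp
  finally show ?thesis .
qed

theorem theorem5p7:
  "\<exists>c>0. \<forall>n K \<mu> m f.
     1 \<le> n \<and> sym_convex_body n K \<and> log_concave_measure n \<mu> \<and>
     absolutely_continuous (LebN n) \<mu> \<and> is_median n \<mu> K m \<and>
     (FK n \<mu> K has_real_derivative f) (at m)
   \<longrightarrow>
     (\<forall>\<epsilon>::real. 0 < \<epsilon> \<and> \<epsilon> < 1 \<longrightarrow>
        FK n \<mu> K ((1 - \<epsilon>) * m) \<le> 1/2 * exp (- 2 * \<epsilon> * (m * f)) \<and>
        1/2 * exp (- 2 * \<epsilon> * (m * f)) \<le> 1/2 * exp (- c * \<epsilon> / sqrt (betaK n \<mu> K)))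
   \<and>
     (B_property n \<mu> K \<and> measure \<mu> K \<le> 1/2 \<longrightarrow>
       (\<forall>\<epsilon>::real. 0 < \<epsilon> \<and> \<epsilon> < 1 \<longrightarrow>
          measure \<mu> (vscale n \<epsilon> ` K) \<le> \<epsilon> powr (2 * f) * measure \<mu> K \<and>
          \<epsilon> powr (2 * f) * measure \<mu> K
            \<le> \<epsilon> powr (1 / (16 * (\<integral>x. \<bar>normK n K x - m\<bar> \<partial>\<mu>))) * measure \<mu> K \<and>
          FK n \<mu> K (\<epsilon> * m) \<le> 1/2 * \<epsilon> powr (2 * (m * f)) \<and>
          1/2 * \<epsilon> powr (2 * (m * f)) \<le> 1/2 * \<epsilon> powr (c / sqrt (betaK n \<mu> K))))"
proof (intro exI[of _ "1 / (16 * 2 ^ 257) :: real"] conjI allI impI)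
  fix n K \<mu> m f
  assume "1 \<le> n \<and> sym_convex_body n K \<and> log_concave_measure n \<mu> \<and>
     absolutely_continuous (LebN n) \<mu> \<and> is_median n \<mu> K m \<and>
     (FK n \<mu> K has_real_derivative f) (at m)"
  then interpret norm_median n K \<mu> m f by unfold_locales auto
  have beta: "1 / (16 * 2 ^ 257) / sqrt (betaK n \<mu> K) \<le> 2 * (m * f)" by (rule inverse_sqrt_beta_le)
  {
    fix \<epsilon> :: real assume \<epsilon>: "0 < \<epsilon> \<and> \<epsilon> < 1"
    show "FK n \<mu> K ((1 - \<epsilon>) * m) \<le> 1/2 * exp (- 2 * \<epsilon> * (m * f))"
      using \<epsilon> by (intro FK_lower_deviation_le) auto
    show "1/2 * exp (- 2 * \<epsilon> * (m * f)) \<le> 1/2 * exp (- (1 / (16 * 2 ^ 257)) * \<epsilon> / sqrt (betaK n \<mu> K))"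
      using \<epsilon> mult_left_mono[OF beta, of \<epsilon>] by (simp add: algebra_simps)
  }
  assume B: "B_property n \<mu> K \<and> measure \<mu> K \<le> 1/2"
  fix \<epsilon> :: real assume \<epsilon>: "0 < \<epsilon> \<and> \<epsilon> < 1"
  show "measure \<mu> (vscale n \<epsilon> ` K) \<le> \<epsilon> powr (2 * f) * measure \<mu> K"
    using B \<epsilon> by (intro measure_dilate_le) auto
  show "\<epsilon> powr (2 * f) * measure \<mu> K
      \<le> \<epsilon> powr (1 / (16 * (\<integral>x. \<bar>normK n K x - m\<bar> \<partial>\<mu>))) * measure \<mu> K"
    using \<epsilon> FK_deriv_ge_mean_abs_deviation by (intro mult_right_mono powr_mono') auto
  show "FK n \<mu> K (\<epsilon> * m) \<le> 1/2 * \<epsilon> powr (2 * (m * f))"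
    using B \<epsilon> by (intro FK_small_ball_le) auto
  show "1/2 * \<epsilon> powr (2 * (m * f)) \<le> 1/2 * \<epsilon> powr (1 / (16 * 2 ^ 257) / sqrt (betaK n \<mu> K))"
    using \<epsilon> beta by (intro mult_left_mono powr_mono') auto
qed simp

end
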